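(* Let $\Phi$ be an atomic CSP on $n=|V|$ variables, $\pi$ an admissible projection scheme with parameter $\eta$ and $\kappa$ as in (A2), and $\epsilon\in(0,1/2)$. Let $V'\subseteq V$ and let $Y\in\prod_{v\in V'}Q_v$ be a partial assignment. Let $H'$ be a connected component of $H(Y)$ with $|\mathcal{C}(H')|\le 20\Delta\log(n\kappa/\epsilon)$. Let $X$ be obtained by sampling each $X(v)$ independently and uniformly from $\pi_v^{-1}(Y(v))$ for $v\in H'\cap V'$ and from $\Omega_v$ for $v\in H'\cap(V\setminus V')$. Then the probability that $X$ satisfies all constraints $C\in\mathcal{C}(H')$ is at least $(n\kappa/\epsilon)^{-\eta}$.
   Context: CSP notation: $\Phi=(V,(\Omega_v),\mathcal{C})$, constraints depending only on $\mathrm{vbl}(C)$; atomic: each $C$ has a unique violating assignment $\boldsymbol{C}\in\prod_{v\in\mathrm{vbl}(C)}\Omega_v$; degree $\Delta=\max_C|\{C':\mathrm{vbl}(C)\cap\mathrm{vbl}(C')\ne\emptyset\}|$; $\mu_\Phi$ uniform on satisfying assignments. Projection scheme $\pi_v:\Omega_v\to Q_v$ ($Q_v$ finite nonempty); $\mathbb{P}_\pi,\mu_\pi$ pushforwards of the uniform distribution on $\prod_v\Omega_v$ and of $\mu_\Phi$; $\boldsymbol{C}_\pi(v)=\pi_v(\boldsymbol{C}(v))$; $b(C)=\prod_{u\in\mathrm{vbl}(C)}|\pi_u^{-1}(\boldsymbol{C}_\pi(u))|^{-1}$, $b=\max_Cb(C)$; $q_{\mathrm{TV}}=\max_{v,Y}d_{\mathrm{TV}}(\mathbb{P}_\pi[\mathrm{value}(v)=\cdot],\mu_\pi[\mathrm{value}(v)=\cdot\mid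 Y^{-v}])$; $\overline{\mathrm{vbl}}(C)=\{v\in\mathrm{vbl}(C):|Q_v|>1\}$; $\zeta(C)=\max\{1,\max_{v\in\overline{\mathrm{vbl}}(C)}\min(\frac{(1-3b)^\Delta q_{\mathrm{TV}}}{\mathbb{P}_\pi[\mathrm{value}(v)=\boldsymbol{C}_\pi(v)]},2\Delta)\}$. Admissible with parameter $\eta\in(0,1/2)$: (A1) $b\le\eta/(300\Delta)$; (A2) there is $\kappa\ge4\log(3000\Delta)$, $\kappa\le K(\log\Delta+\log\max|Q_v|+\log\max|\mathrm{vbl}(C)|)$ ($K$ universal), with $|\overline{\mathrm{vbl}}(C)|^2\kappa^2\zeta(C)\prod_{v\in\overline{\mathrm{vbl}}(C)}((1-3b)^{-\Delta}\mathbb{P}_\pi[\mathrm{value}(v)=\boldsymbol{C}_\pi(v)]+e^{-\kappa/3})\le(60000\Delta)^{-2}$ for all $C$; (A3) for $v\in\mathrm{vbl}(C)\cap\mathrm{vbl}(C')$, $\mathbb{P}_\pi[\mathrm{value}(v)=\boldsymbol{C}_\pi(v)]$ and $\mathbb{P}_\pi[\mathrm{value}(v)=\boldsymbol{C}'_\pi(v)]$ are within a factor $2$; (A4) $\pi_v$ computable and fibres samplable in time $K\log|\Omega_v|$. For $Y\in\prod_{v\in V'}Q_v$: $\mathcal{C}(Y)$ = constraints $C$ with $Y(v)=\boldsymbol{C}_\pi(v)$ for all $v\in\mathrm{vbl}(C)\cap V'$; $H(Y)$ = graph on $V$, $u\ne v$ adjacent iff $u,v\in\mathrm{vbl}(C)$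 for some $C\in\mathcal{C}(Y)$; for a component $H'$, $\mathcal{C}(H')=\{C\in\mathcal{C}(Y):\mathrm{vbl}(C)\subseteq H'\}$. *)

theory Defs
  imports "HOL-Probability.Probability"
begin

(* A CSP is given by the variable set V, domains Omega v, the (finite) set Cs of
   constraints, the scope vbl C of each constraint, and (atomicity) the unique
   violating assignment viol C of each constraint. *)

definition atomic_csp ::
  "'v set \<Rightarrow> ('v \<Rightarrow> 'a set) \<Rightarrow> 'c set \<Rightarrow> ('c \<Rightarrow> 'v set) \<Rightarrow> ('c \<Rightarrow> 'v \<Rightarrow> 'a) \<Rightarrow> bool" where
  "atomic_csp V Omega Cs vbl viol \<longleftrightarrow>
     finite V \<and> (\<forall>v\<in>V. finite (Omega v) \<and> Omega v \<noteq> {}) \<and> finite Cs \<and>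
     (\<forall>C\<in>Cs. vbl C \<subseteq> V \<and> (\<forall>v\<in>vbl C. viol C v \<in> Omega v))"

definition violates :: "('c \<Rightarrow> 'v set) \<Rightarrow> ('c \<Rightarrow> 'v \<Rightarrow> 'a) \<Rightarrow> ('v \<Rightarrow> 'a) \<Rightarrow> 'c \<Rightarrow> bool" where
  "violates vbl viol \<sigma> C \<longleftrightarrow> (\<forall>v\<in>vbl C. \<sigma> v = viol C v)"

definition csp_degree :: "'c set \<Rightarrow> ('c \<Rightarrow> 'v set) \<Rightarrow> nat" where
  "csp_degree Cs vbl = Max (insert 1 ((\<lambda>C. card {C'\<in>Cs. vbl C \<inter> vbl C' \<noteq> {}}) ` Cs))"

definition sat_assignments ::
  "'v set \<Rightarrow> ('v \<Rightarrow> 'a set) \<Rightarrow> 'c set \<Rightarrow> ('c \<Rightarrow> 'v set) \<Rightarrow> ('c \<Rightarrow> 'v \<Rightarrow> 'a) \<Rightarrow> ('v \<Rightarrow> 'a) set" where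
  "sat_assignments V Omega Cs vbl viol =
     {\<sigma> \<in> PiE V Omega. \<forall>C\<in>Cs. \<not> violates vbl viol \<sigma> C}"

definition projection_scheme ::
  "'v set \<Rightarrow> ('v \<Rightarrow> 'a set) \<Rightarrow> ('v \<Rightarrow> 'q set) \<Rightarrow> ('v \<Rightarrow> 'a \<Rightarrow> 'q) \<Rightarrow> bool" where
  "projection_scheme V Omega Q prj \<longleftrightarrow>
     (\<forall>v\<in>V. finite (Q v) \<and> Q v \<noteq> {} \<and> prj v ` Omega v = Q v)"

definition fibre :: "('v \<Rightarrow> 'a set) \<Rightarrow> ('v \<Rightarrow> 'a \<Rightarrow> 'q) \<Rightarrow> 'v \<Rightarrow> 'q \<Rightarrow> 'a set" where
  "fibre Omega prj v q = {x \<in> Omega v. prj v x = q}"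

definition Ppi :: "('v \<Rightarrow> 'a set) \<Rightarrow> ('v \<Rightarrow> 'a \<Rightarrow> 'q) \<Rightarrow> 'v \<Rightarrow> 'q \<Rightarrow> real" where
  "Ppi Omega prj v q = real (card (fibre Omega prj v q)) / real (card (Omega v))"

definition bC :: "('v \<Rightarrow> 'a set) \<Rightarrow> ('v \<Rightarrow> 'a \<Rightarrow> 'q) \<Rightarrow> ('c \<Rightarrow> 'v set) \<Rightarrow> ('c \<Rightarrow> 'v \<Rightarrow> 'a) \<Rightarrow> 'c \<Rightarrow> real" where
  "bC Omega prj vbl viol C =
     (\<Prod>u\<in>vbl C. 1 / real (card (fibre Omega prj u (prj u (viol C u)))))"

definition bmax :: "('v \<Rightarrow> 'a set) \<Rightarrow> ('v \<Rightarrow> 'a \<Rightarrow> 'q) \<Rightarrow> 'c set \<Rightarrow> ('c \<Rightarrow> 'v set) \<Rightarrow> ('c \<Rightarrow> 'v \<Rightarrow> 'a) \<Rightarrow> real" where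
  "bmax Omega prj Cs vbl viol = Max (insert 0 (bC Omega prj vbl viol ` Cs))"

definition sat_matching ::
  "'v set \<Rightarrow> ('v \<Rightarrow> 'a set) \<Rightarrow> 'c set \<Rightarrow> ('c \<Rightarrow> 'v set) \<Rightarrow> ('c \<Rightarrow> 'v \<Rightarrow> 'a)
   \<Rightarrow> ('v \<Rightarrow> 'a \<Rightarrow> 'q) \<Rightarrow> 'v \<Rightarrow> ('v \<Rightarrow> 'q) \<Rightarrow> ('v \<Rightarrow> 'a) set" where
  "sat_matching V Omega Cs vbl viol prj v Y =
     {\<sigma> \<in> sat_assignments V Omega Cs vbl viol. \<forall>u\<in>V - {v}. prj u (\<sigma> u) = Y u}"

definition mu_cond ::
  "'v set \<Rightarrow> ('v \<Rightarrow> 'a set) \<Rightarrow> 'c set \<Rightarrow> ('c \<Rightarrow> 'v set) \<Rightarrow> ('c \<Rightarrow> 'v \<Rightarrow> 'a)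
   \<Rightarrow> ('v \<Rightarrow> 'a \<Rightarrow> 'q) \<Rightarrow> 'v \<Rightarrow> ('v \<Rightarrow> 'q) \<Rightarrow> 'q \<Rightarrow> real" where
  "mu_cond V Omega Cs vbl viol prj v Y q =
     real (card {\<sigma> \<in> sat_matching V Omega Cs vbl viol prj v Y. prj v (\<sigma> v) = q})
     / real (card (sat_matching V Omega Cs vbl viol prj v Y))"

(* q_TV: maximum over v \<in> V and projected assignments Y on V - {v} with
   mu_pi(Y^{-v}) > 0 of the total variation distance between the marginal of
   P_pi at v and the conditional marginal of mu_pi at v given Y^{-v}.
   (0 is inserted only to make Max well-defined; TV distances are >= 0.) *)
definition qTV ::
  "'v set \<Rightarrow> ('v \<Rightarrow> 'a set) \<Rightarrow> 'c set \<Rightarrow> ('c \<Rightarrow> 'v set) \<Rightarrow> ('c \<Rightarrow> 'v \<Rightarrow> 'a)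
   \<Rightarrow> ('v \<Rightarrow> 'q set) \<Rightarrow> ('v \<Rightarrow> 'a \<Rightarrow> 'q) \<Rightarrow> real" where
  "qTV V Omega Cs vbl viol Q prj =
     Max (insert 0
       {(1/2) * (\<Sum>q\<in>Q v. \<bar>Ppi Omega prj v q - mu_cond V Omega Cs vbl viol prj v Y q\<bar>) | v Y.
          v \<in> V \<and> Y \<in> PiE (V - {v}) Q \<and> sat_matching V Omega Cs vbl viol prj v Y \<noteq> {}})"

definition vbar :: "('v \<Rightarrow> 'q set) \<Rightarrow> ('c \<Rightarrow> 'v set) \<Rightarrow> 'c \<Rightarrow> 'v set" where
  "vbar Q vbl C = {v \<in> vbl C. card (Q v) > 1}"

definition zeta ::
  "'v set \<Rightarrow> ('v \<Rightarrow> 'a set) \<Rightarrow> 'c set \<Rightarrow> ('c \<Rightarrow> 'v set) \<Rightarrow> ('c \<Rightarrow> 'v \<Rightarrow> 'a)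
   \<Rightarrow> ('v \<Rightarrow> 'q set) \<Rightarrow> ('v \<Rightarrow> 'a \<Rightarrow> 'q) \<Rightarrow> 'c \<Rightarrow> real" where
  "zeta V Omega Cs vbl viol Q prj C =
     (let b = bmax Omega prj Cs vbl viol; \<Delta> = csp_degree Cs vbl;
          q = qTV V Omega Cs vbl viol Q prj in
      Max (insert 1 ((\<lambda>v. min ((1 - 3*b) ^ \<Delta> * q / Ppi Omega prj v (prj v (viol C v))) (2 * real \<Delta>))
                      ` vbar Q vbl C)))"

(* Admissibility with parameter eta, witnessed by kappa, for the universal
   constant K of (A2).  (A4) is a computational-complexity requirement and is
   not represented. *)
definition admissible ::
  "'v set \<Rightarrow> ('v \<Rightarrow> 'a set) \<Rightarrow> 'c set \<Rightarrow> ('c \<Rightarrow> 'v set) \<Rightarrow> ('c \<Rightarrow> 'v \<Rightarrow> 'a)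
   \<Rightarrow> ('v \<Rightarrow> 'q set) \<Rightarrow> ('v \<Rightarrow> 'a \<Rightarrow> 'q) \<Rightarrow> real \<Rightarrow> real \<Rightarrow> real \<Rightarrow> bool" where
  "admissible V Omega Cs vbl viol Q prj K \<eta> \<kappa> \<longleftrightarrow>
     (let b = bmax Omega prj Cs vbl viol; \<Delta> = real (csp_degree Cs vbl);
          P = (\<lambda>C v. Ppi Omega prj v (prj v (viol C v))) in
       0 < \<eta> \<and> \<eta> < 1/2 \<and>
       \<comment> \<open>(A1)\<close>
       b \<le> \<eta> / (300 * \<Delta>) \<and>
       \<comment> \<open>(A2)\<close>
       \<kappa> \<ge> 4 * ln (3000 * \<Delta>) \<and>
       \<kappa> \<le> K * (ln \<Delta> + ln (real (Max (insert 1 ((\<lambda>v. card (Q v)) ` V))))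
                    + ln (real (Max (insert 1 ((\<lambda>C. card (vbl C)) ` Cs))))) \<and>
       (\<forall>C\<in>Cs. (real (card (vbar Q vbl C)))^2 * \<kappa>^2 * zeta V Omega Cs vbl viol Q prj C *
           (\<Prod>v\<in>vbar Q vbl C. P C v / (1 - 3*b) ^ csp_degree Cs vbl + exp (-\<kappa>/3))
         \<le> 1 / (60000 * \<Delta>)^2) \<and>
       \<comment> \<open>(A3)\<close>
       (\<forall>C\<in>Cs. \<forall>C'\<in>Cs. \<forall>v\<in>vbl C \<inter> vbl C'. P C v \<le> 2 * P C' v \<and> P C' v \<le> 2 * P C v))"

definition consY :: "'c set \<Rightarrow> ('c \<Rightarrow> 'v set) \<Rightarrow> ('c \<Rightarrow> 'v \<Rightarrow> 'a) \<Rightarrow> ('v \<Rightarrow> 'a \<Rightarrow> 'q)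
   \<Rightarrow> 'v set \<Rightarrow> ('v \<Rightarrow> 'q) \<Rightarrow> 'c set" where
  "consY Cs vbl viol prj V' Y = {C \<in> Cs. \<forall>v\<in>vbl C \<inter> V'. Y v = prj v (viol C v)}"

definition HY_edges :: "'v set \<Rightarrow> 'c set \<Rightarrow> ('c \<Rightarrow> 'v set) \<Rightarrow> ('c \<Rightarrow> 'v \<Rightarrow> 'a) \<Rightarrow> ('v \<Rightarrow> 'a \<Rightarrow> 'q)
   \<Rightarrow> 'v set \<Rightarrow> ('v \<Rightarrow> 'q) \<Rightarrow> ('v \<times> 'v) set" where
  "HY_edges V Cs vbl viol prj V' Y =
     {(u, w). u \<in> V \<and> w \<in> V \<and> u \<noteq> w \<and> (\<exists>C\<in>consY Cs vbl viol prj V' Y. u \<in> vbl C \<and> w \<in> vbl C)}"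

definition is_component_HY :: "'v set \<Rightarrow> 'c set \<Rightarrow> ('c \<Rightarrow> 'v set) \<Rightarrow> ('c \<Rightarrow> 'v \<Rightarrow> 'a) \<Rightarrow> ('v \<Rightarrow> 'a \<Rightarrow> 'q)
   \<Rightarrow> 'v set \<Rightarrow> ('v \<Rightarrow> 'q) \<Rightarrow> 'v set \<Rightarrow> bool" where
  "is_component_HY V Cs vbl viol prj V' Y H' \<longleftrightarrow>
     (\<exists>v\<in>V. H' = {u \<in> V. (v, u) \<in> (HY_edges V Cs vbl viol prj V' Y)\<^sup>*})"

definition consH :: "'c set \<Rightarrow> ('c \<Rightarrow> 'v set) \<Rightarrow> ('c \<Rightarrow> 'v \<Rightarrow> 'a) \<Rightarrow> ('v \<Rightarrow> 'a \<Rightarrow> 'q)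
   \<Rightarrow> 'v set \<Rightarrow> ('v \<Rightarrow> 'q) \<Rightarrow> 'v set \<Rightarrow> 'c set" where
  "consH Cs vbl viol prj V' Y H' = {C \<in> consY Cs vbl viol prj V' Y. vbl C \<subseteq> H'}"

definition sample_dom :: "('v \<Rightarrow> 'a set) \<Rightarrow> ('v \<Rightarrow> 'a \<Rightarrow> 'q) \<Rightarrow> 'v set \<Rightarrow> ('v \<Rightarrow> 'q) \<Rightarrow> 'v \<Rightarrow> 'a set" where
  "sample_dom Omega prj V' Y v = (if v \<in> V' then fibre Omega prj v (Y v) else Omega v)"

definition prob_X_sat :: "('v \<Rightarrow> 'a set) \<Rightarrow> 'c set \<Rightarrow> ('c \<Rightarrow> 'v set) \<Rightarrow> ('c \<Rightarrow> 'v \<Rightarrow> 'a) \<Rightarrow> ('v \<Rightarrow> 'a \<Rightarrow> 'q)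
   \<Rightarrow> 'v set \<Rightarrow> ('v \<Rightarrow> 'q) \<Rightarrow> 'v set \<Rightarrow> real" where
  "prob_X_sat Omega Cs vbl viol prj V' Y H' =
     measure_pmf.prob (pmf_of_set (PiE H' (sample_dom Omega prj V' Y)))
       {X. \<forall>C\<in>consH Cs vbl viol prj V' Y H'. \<not> violates vbl viol X C}"

end

theory Submission
  imports Defs
begin

text \<open>
  On the component \<open>H'\<close> the sample \<open>X\<close> is uniform on a product space, so a constraint
  \<open>C \<in> C(H')\<close> is violated with probability \<open>\<Prod>v\<in>vbl C. 1 / |sample_dom v| \<le> b(C) \<le> b\<close>, and this stays
  true conditioned on avoiding any family of constraints sharing no variable with \<open>C\<close>.
  Every constraint overlaps at most \<open>\<Delta>\<close> constraints and \<open>4 b \<Delta> \<le> 1\<close>, so the Lovasz local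
  lemma (in its counting form) gives \<open>Pr[X satisfies C(H')] \<ge> (1 - 2b)^|C(H')|\<close>.
  Finally \<open>(1 - 2b)^m \<ge> exp (-4 b m)\<close>, and \<open>b \<le> \<eta>/(300 \<Delta>)\<close> together with
  \<open>m \<le> 20 \<Delta> ln (n \<kappa> / \<epsilon>)\<close> makes this at least \<open>(n \<kappa> / \<epsilon>) powr -\<eta>\<close>.
\<close>

definition avoiding :: "'x set \<Rightarrow> ('c \<Rightarrow> 'x set) \<Rightarrow> 'c set \<Rightarrow> 'x set" where
  "avoiding Om A S = {x\<in>Om. \<forall>D\<in>S. x \<notin> A D}"

lemma avoiding_insert: "avoiding Om A (insert C S) = avoiding Om A S - A C"
  unfolding avoiding_def by auto

lemma card_avoiding_le_card_avoiding_superset: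
  assumes "finite Om" "finite S" "S' \<subseteq> S"
  shows "card (avoiding Om A S')
           \<le> card (avoiding Om A S) + (\<Sum>D\<in>S - S'. card (A D \<inter> avoiding Om A S'))"
proof -
  have "avoiding Om A S' \<subseteq> avoiding Om A S \<union> (\<Union>D\<in>S - S'. A D \<inter> avoiding Om A S')"
    using assms(3) by (auto simp: avoiding_def)
  then have "card (avoiding Om A S') \<le> card (avoiding Om A S \<union> (\<Union>D\<in>S - S'. A D \<inter> avoiding Om A S'))"
    using assms by (intro card_mono) (auto simp: avoiding_def)
  also have "\<dots> \<le> card (avoiding Om A S) + (\<Sum>D\<in>S - S'. card (A D \<inter> avoiding Om A S'))"
    using assms by (intro order_trans[OF card_Un_le] add_left_mono card_UN_le) auto
  finally show ?thesis .
qed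

locale counting_lll =
  fixes Om :: "'x set" and T :: "'c set" and A :: "'c \<Rightarrow> 'x set"
    and nb :: "'c \<Rightarrow> 'c \<Rightarrow> bool" and p :: real and d :: nat
  assumes finite_Om: "finite Om" and finite_T: "finite T"
    and event_le: "\<And>C S. C \<in> T \<Longrightarrow> S \<subseteq> T \<Longrightarrow> (\<forall>D\<in>S. \<not> nb C D) \<Longrightarrow>
        real (card (A C \<inter> avoiding Om A S)) \<le> p * card (avoiding Om A S)"
    and neighbours_le: "\<And>C. C \<in> T \<Longrightarrow> card {D\<in>T. nb C D} \<le> d"
    and p_nonneg: "0 \<le> p" and p_small: "4 * p * d \<le> 1"
begin

lemma finite_avoiding [simp]: "finite (avoiding Om A S)" "finite (B \<inter> avoiding Om A S)"
  using finite_Om unfolding avoiding_def by simp_all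

lemma card_event_avoiding_le:
  assumes "S \<subseteq> T" "C \<in> T"
  shows "real (card (A C \<inter> avoiding Om A S)) \<le> 2 * p * card (avoiding Om A S)"
  using assms
proof (induction "card S" arbitrary: S C rule: less_induct)
  case less
  define S' where "S' = {D\<in>S. \<not> nb C D}"
  have "finite S" "S' \<subseteq> S"
    using less.prems finite_T finite_subset by (auto simp: S'_def)
  have "card (A C \<inter> avoiding Om A S) \<le> card (A C \<inter> avoiding Om A S')"
    using \<open>S' \<subseteq> S\<close> by (intro card_mono finite_avoiding) (auto simp: avoiding_def)
  also have "real \<dots> \<le> p * card (avoiding Om A S')"
    using less.prems by (intro event_le) (auto simp: S'_def)
  finally have C_le: "real (card (A C \<inter> avoiding Om A S)) \<le> p * card (avoiding Om A S')"
    by simp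
  have IH: "real (card (A D \<inter> avoiding Om A S')) \<le> 2 * p * card (avoiding Om A S')"
    if "D \<in> S - S'" for D
  proof -
    have "card S' < card S"
      using that \<open>finite S\<close> \<open>S' \<subseteq> S\<close> by (intro psubset_card_mono) auto
    then show ?thesis
      using less.hyps that less.prems by (auto simp: S'_def)
  qed
  have "card (S - S') \<le> card {D\<in>T. nb C D}"
    using less.prems finite_T by (intro card_mono) (auto simp: S'_def)
  also have "\<dots> \<le> d"
    using neighbours_le less.prems by blast
  finally have "card (S - S') \<le> d" .
  have "real (card (avoiding Om A S'))
      \<le> card (avoiding Om A S) + (\<Sum>D\<in>S - S'. real (card (A D \<inter> avoiding Om A S')))"
    using card_avoiding_le_card_avoiding_superset[OF finite_Om \<open>finite S\<close> \<open>S' \<subseteq> S\<close>, of A]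
    by (simp flip: of_nat_sum of_nat_add)
  also have "\<dots> \<le> card (avoiding Om A S) + card (S - S') * (2 * p * card (avoiding Om A S'))"
    using sum_mono[OF IH, of "S - S'"] by simp
  also have "\<dots> \<le> card (avoiding Om A S) + d * (2 * p * card (avoiding Om A S'))"
    using \<open>card (S - S') \<le> d\<close> p_nonneg by (intro add_left_mono mult_right_mono) auto
  also have "\<dots> \<le> card (avoiding Om A S) + card (avoiding Om A S') / 2"
    using mult_right_mono[OF p_small, of "card (avoiding Om A S')"] by (simp add: mult_ac)
  finally have "real (card (avoiding Om A S')) \<le> 2 * card (avoiding Om A S)"
    by simp
  then have "p * card (avoiding Om A S') \<le> p * (2 * card (avoiding Om A S))"
    using p_nonneg by (rule mult_left_mono)
  then show ?case
    using C_le by simp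
qed

lemma card_avoiding_ge:
  assumes "2 * p \<le> 1"
  shows "(1 - 2 * p) ^ card T * card Om \<le> card (avoiding Om A T)"
proof -
  have "S \<subseteq> T \<Longrightarrow> (1 - 2 * p) ^ card S * card Om \<le> card (avoiding Om A S)" for S
  proof (induction S rule: infinite_finite_induct)
    case (infinite S)
    then show ?case using finite_T finite_subset by blast
  next
    case empty
    then show ?case by (simp add: avoiding_def)
  next
    case (insert C S)
    have "card (avoiding Om A S) = card (avoiding Om A (insert C S)) + card (A C \<inter> avoiding Om A S)"
      by (subst card_Un_disjoint[symmetric]) (auto simp: avoiding_insert intro: arg_cong[where f = card])
    then have "(1 - 2 * p) * card (avoiding Om A S) \<le> card (avoiding Om A (insert C S))"
      using card_event_avoiding_le[of S C] insert.prems by (simp add: algebra_simps)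
    moreover have "(1 - 2 * p) * ((1 - 2 * p) ^ card S * card Om) \<le> (1 - 2 * p) * card (avoiding Om A S)"
      using insert assms by (intro mult_left_mono) auto
    ultimately show ?case using insert by simp
  qed
  then show ?thesis by simp
qed

end

lemma card_PiE_fixing_coordinates_le:
  fixes D :: "'v \<Rightarrow> 'a set"
  assumes "finite H" "W \<subseteq> H" "\<And>v. v \<in> H \<Longrightarrow> finite (D v)"
    and P_indep: "\<And>X X'. \<forall>v\<in>H - W. X v = X' v \<Longrightarrow> P X \<Longrightarrow> P X'"
  shows "card {X\<in>PiE H D. (\<forall>v\<in>W. X v = z v) \<and> P X} * (\<Prod>v\<in>W. card (D v))
           \<le> card {X\<in>PiE H D. P X}"
proof -
  define F where "F = {X\<in>PiE H D. (\<forall>v\<in>W. X v = z v) \<and> P X}"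
  define glue :: "('v \<Rightarrow> 'a) \<times> ('v \<Rightarrow> 'a) \<Rightarrow> 'v \<Rightarrow> 'a"
    where "glue = (\<lambda>(X, Y) v. if v \<in> W then Y v else X v)"
  have "card F * (\<Prod>v\<in>W. card (D v)) = card (F \<times> PiE W D)"
    using finite_subset[OF assms(2,1)] by (simp add: card_cartesian_product card_PiE)
  also have "\<dots> \<le> card {X\<in>PiE H D. P X}"
  proof (rule card_inj_on_le)
    show "inj_on glue (F \<times> PiE W D)"
    proof (rule inj_onI)
      fix u u' assume "u \<in> F \<times> PiE W D" "u' \<in> F \<times> PiE W D" "glue u = glue u'"
      then show "u = u'"
        by (cases u, cases u') (auto simp: glue_def F_def fun_eq_iff PiE_def extensional_def split: if_splits, metis)
    qed
    show "glue ` (F \<times> PiE W D) \<subseteq> {X\<in>PiE H D. P X}"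
    proof (rule image_subsetI)
      fix u assume "u \<in> F \<times> PiE W D"
      then show "glue u \<in> {X\<in>PiE H D. P X}"
        using assms(2) P_indep[of "fst u"] by (cases u) (auto simp: glue_def F_def PiE_def extensional_def)
    qed
    show "finite {X\<in>PiE H D. P X}"
      using assms by (simp add: finite_PiE)
  qed
  finally show ?thesis unfolding F_def .
qed

lemma exp_le_power_one_minus:
  fixes x :: real and m :: nat
  assumes "0 \<le> x" "x \<le> 1/2"
  shows "exp (- 2 * x * m) \<le> (1 - x) ^ m"
proof -
  have "- x - 2 * x\<^sup>2 \<le> ln (1 - x)"
    using assms by (rule ln_one_minus_pos_lower_bound)
  moreover have "2 * x\<^sup>2 \<le> x"
    using assms mult_right_mono[of x "1/2" "2 * x"] by (simp add: power2_eq_square)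
  ultimately have "- 2 * x * m \<le> m * ln (1 - x)"
    using mult_left_mono[of "- 2 * x" "ln (1 - x)" "real m"] by (simp add: mult_ac)
  then have "exp (- 2 * x * m) \<le> exp (m * ln (1 - x))"
    by simp
  also have "\<dots> = (1 - x) ^ m"
    using assms by (simp add: exp_of_nat_mult)
  finally show ?thesis .
qed

lemma powr_minus_le_power_one_minus:
  fixes b \<eta> N :: real and d m :: nat
  assumes b: "0 \<le> b" and d: "1 \<le> d" and bd: "300 * (b * d) \<le> \<eta>" and \<eta>: "\<eta> < 1/2"
    and N: "0 < N" and m: "m \<le> 20 * d * ln N"
  shows "N powr - \<eta> \<le> (1 - 2 * b) ^ m"
proof -
  have "0 \<le> ln N"
    using order_trans[OF of_nat_0_le_iff m] d by (simp add: zero_le_mult_iff)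
  have "b \<le> b * d"
    using b d by (simp add: mult_le_cancel_left1)
  have "4 * b * m \<le> 4 * b * (20 * d * ln N)"
    using m b by (intro mult_left_mono) auto
  also have "\<dots> = 80 * (b * d) * ln N"
    by (simp add: mult_ac)
  also have "\<dots> \<le> \<eta> * ln N"
    using bd mult_nonneg_nonneg[OF b, of d] \<open>0 \<le> ln N\<close> by (intro mult_right_mono) auto
  finally have "N powr - \<eta> \<le> exp (- 2 * (2 * b) * m)"
    using N by (simp add: powr_def)
  also have "\<dots> \<le> (1 - 2 * b) ^ m"
    using b bd \<eta> \<open>b \<le> b * d\<close> by (intro exp_le_power_one_minus) auto
  finally show ?thesis .
qed

lemma bC_le_bmax: "finite Cs \<Longrightarrow> C \<in> Cs \<Longrightarrow> bC Omega prj vbl viol C \<le> bmax Omega prj Cs vbl viol"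
  unfolding bmax_def by (intro Max_ge) auto

lemma bmax_nonneg: "finite Cs \<Longrightarrow> 0 \<le> bmax Omega prj Cs vbl viol"
  unfolding bmax_def by (intro Max_ge) auto

lemma csp_degree_ge_1: "finite Cs \<Longrightarrow> 1 \<le> csp_degree Cs vbl"
  unfolding csp_degree_def by (intro Max_ge) auto

lemma card_overlapping_le_csp_degree:
  "finite Cs \<Longrightarrow> C \<in> Cs \<Longrightarrow> card {C'\<in>Cs. vbl C \<inter> vbl C' \<noteq> {}} \<le> csp_degree Cs vbl"
  unfolding csp_degree_def by (intro Max_ge) auto

lemma admissibleD:
  assumes "admissible V Omega Cs vbl viol Q prj K \<eta> \<kappa>" and "finite Cs"
  shows "0 < \<eta>" "\<eta> < 1/2" "300 * (bmax Omega prj Cs vbl viol * csp_degree Cs vbl) \<le> \<eta>" "0 < \<kappa>"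
proof -
  have d: "1 \<le> csp_degree Cs vbl"
    using assms(2) by (rule csp_degree_ge_1)
  have "bmax Omega prj Cs vbl viol \<le> \<eta> / (300 * csp_degree Cs vbl)"
    and "4 * ln (3000 * real (csp_degree Cs vbl)) \<le> \<kappa>"
    and "0 < \<eta>" "\<eta> < 1/2"
    using assms(1) by (auto simp: admissible_def Let_def)
  moreover have "0 < ln (3000 * real (csp_degree Cs vbl))"
    using d by simp
  ultimately show "0 < \<eta>" "\<eta> < 1/2" "0 < \<kappa>"
    and "300 * (bmax Omega prj Cs vbl viol * csp_degree Cs vbl) \<le> \<eta>"
    using d by (auto simp: field_simps, linarith)
qed

definition violating :: "('c \<Rightarrow> 'v set) \<Rightarrow> ('c \<Rightarrow> 'v \<Rightarrow> 'a) \<Rightarrow> 'c \<Rightarrow> ('v \<Rightarrow> 'a) set" where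
  "violating vbl viol C = {X. violates vbl viol X C}"

definition sample_space :: "('v \<Rightarrow> 'a set) \<Rightarrow> ('v \<Rightarrow> 'a \<Rightarrow> 'q) \<Rightarrow> 'v set \<Rightarrow> ('v \<Rightarrow> 'q) \<Rightarrow> 'v set \<Rightarrow> ('v \<Rightarrow> 'a) set" where
  "sample_space Omega prj V' Y H' = PiE H' (sample_dom Omega prj V' Y)"

context
  fixes V :: "'v set" and Omega :: "'v \<Rightarrow> 'a set" and Cs :: "'c set"
    and vbl :: "'c \<Rightarrow> 'v set" and viol :: "'c \<Rightarrow> 'v \<Rightarrow> 'a"
    and Q :: "'v \<Rightarrow> 'q set" and prj :: "'v \<Rightarrow> 'a \<Rightarrow> 'q"
    and V' :: "'v set" and Y :: "'v \<Rightarrow> 'q" and H' :: "'v set"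
  assumes csp: "atomic_csp V Omega Cs vbl viol"
    and prjs: "projection_scheme V Omega Q prj"
    and Y: "Y \<in> PiE V' Q"
    and H'V: "H' \<subseteq> V"
begin

lemma sample_dom_finite_nonempty:
  assumes "v \<in> V"
  shows "finite (sample_dom Omega prj V' Y v)" "sample_dom Omega prj V' Y v \<noteq> {}"
proof -
  show "finite (sample_dom Omega prj V' Y v)"
    using csp assms by (auto simp: atomic_csp_def sample_dom_def fibre_def)
  show "sample_dom Omega prj V' Y v \<noteq> {}"
  proof (cases "v \<in> V'")
    case True
    then have "Y v \<in> prj v ` Omega v"
      using Y prjs assms by (auto simp: projection_scheme_def)
    then show ?thesis
      using True by (auto simp: sample_dom_def fibre_def)
  next
    case False
    then show ?thesis
      using csp assms by (simp add: atomic_csp_def sample_dom_def)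
  qed
qed

lemma prod_inverse_card_sample_dom_le_bC:
  assumes C: "C \<in> consY Cs vbl viol prj V' Y"
  shows "(\<Prod>v\<in>vbl C. 1 / card (sample_dom Omega prj V' Y v)) \<le> bC Omega prj vbl viol C"
  unfolding bC_def
proof (rule prod_mono, safe)
  fix v assume v: "v \<in> vbl C"
  let ?F = "fibre Omega prj v (prj v (viol C v))"
  have "C \<in> Cs" "v \<in> V" "viol C v \<in> Omega v"
    using C v csp by (auto simp: consY_def atomic_csp_def)
  then have "viol C v \<in> ?F" "?F \<subseteq> sample_dom Omega prj V' Y v"
    using C v by (auto simp: fibre_def sample_dom_def consY_def)
  moreover have "finite (sample_dom Omega prj V' Y v)"
    using sample_dom_finite_nonempty \<open>v \<in> V\<close> by blast
  ultimately have "0 < card ?F" "card ?F \<le> card (sample_dom Omega prj V' Y v)"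
    by (auto simp: card_gt_0_iff intro: card_mono finite_subset)
  then show "1 / real (card (sample_dom Omega prj V' Y v)) \<le> 1 / real (card ?F)"
    by (simp add: frac_le)
qed simp

lemma card_violating_avoiding_mult_le:
  assumes C: "C \<in> consH Cs vbl viol prj V' Y H'" and S: "S \<subseteq> consH Cs vbl viol prj V' Y H'"
    and disjoint: "\<forall>D\<in>S. vbl C \<inter> vbl D = {}"
  shows "card (violating vbl viol C \<inter> avoiding (sample_space Omega prj V' Y H') (violating vbl viol) S)
           * (\<Prod>v\<in>vbl C. card (sample_dom Omega prj V' Y v))
         \<le> card (avoiding (sample_space Omega prj V' Y H') (violating vbl viol) S)"
proof -
  let ?D = "sample_dom Omega prj V' Y" and ?P = "\<lambda>X. \<forall>D\<in>S. \<not> violates vbl viol X D"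
  have "card {X\<in>PiE H' ?D. (\<forall>v\<in>vbl C. X v = viol C v) \<and> ?P X} * (\<Prod>v\<in>vbl C. card (?D v))
        \<le> card {X\<in>PiE H' ?D. ?P X}"
  proof (rule card_PiE_fixing_coordinates_le[where z = "viol C" and P = ?P])
    show "finite H'"
      using csp H'V finite_subset by (auto simp: atomic_csp_def)
    show "vbl C \<subseteq> H'"
      using C by (simp add: consH_def)
    show "finite (?D v)" if "v \<in> H'" for v
      using sample_dom_finite_nonempty H'V that by blast
    fix X X' :: "'v \<Rightarrow> 'a"
    assume "\<forall>v\<in>H' - vbl C. X v = X' v" "?P X"
    moreover have "vbl D \<subseteq> H' - vbl C" if "D \<in> S" for D
      using that S disjoint by (auto simp: consH_def)
    ultimately show "?P X'"
      unfolding violates_def by (metis subsetD)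
  qed
  moreover have
    "violating vbl viol C \<inter> avoiding (sample_space Omega prj V' Y H') (violating vbl viol) S
       = {X\<in>PiE H' ?D. (\<forall>v\<in>vbl C. X v = viol C v) \<and> ?P X}"
    "avoiding (sample_space Omega prj V' Y H') (violating vbl viol) S = {X\<in>PiE H' ?D. ?P X}"
    by (auto simp: sample_space_def violating_def avoiding_def violates_def)
  ultimately show ?thesis
    by simp
qed

lemma card_violating_avoiding_le:
  assumes C: "C \<in> consH Cs vbl viol prj V' Y H'" and S: "S \<subseteq> consH Cs vbl viol prj V' Y H'"
    and disjoint: "\<forall>D\<in>S. vbl C \<inter> vbl D = {}"
  shows "real (card (violating vbl viol C \<inter> avoiding (sample_space Omega prj V' Y H') (violating vbl viol) S))
           \<le> bmax Omega prj Cs vbl viol * card (avoiding (sample_space Omega prj V' Y H') (violating vbl viol) S)"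
    (is "real ?E \<le> _ * real ?M")
proof -
  let ?n = "\<lambda>v. real (card (sample_dom Omega prj V' Y v))"
  have C': "C \<in> consY Cs vbl viol prj V' Y" "C \<in> Cs" "vbl C \<subseteq> H'"
    using C by (auto simp: consH_def consY_def)
  have "?E * (\<Prod>v\<in>vbl C. ?n v) \<le> ?M"
    using card_violating_avoiding_mult_le[OF assms] by (simp flip: of_nat_prod of_nat_mult)
  moreover have "0 < (\<Prod>v\<in>vbl C. ?n v)"
    using sample_dom_finite_nonempty H'V C'(3) by (intro prod_pos) (auto simp: card_gt_0_iff)
  ultimately have "?E \<le> ?M * (\<Prod>v\<in>vbl C. 1 / ?n v)"
    by (simp add: pos_le_divide_eq prod_dividef)
  also have "\<dots> \<le> ?M * bmax Omega prj Cs vbl viol"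
    using csp order_trans[OF prod_inverse_card_sample_dom_le_bC[OF C'(1)] bC_le_bmax[OF _ C'(2)]]
    by (intro mult_left_mono) (auto simp: atomic_csp_def)
  finally show ?thesis
    by (simp add: mult.commute)
qed

lemma sample_space_finite_nonempty:
  "finite (sample_space Omega prj V' Y H')" "sample_space Omega prj V' Y H' \<noteq> {}"
  using sample_dom_finite_nonempty H'V csp finite_subset
  by (auto simp: sample_space_def atomic_csp_def PiE_eq_empty_iff intro!: finite_PiE)

lemma counting_lll_sample_space:
  assumes "4 * bmax Omega prj Cs vbl viol * csp_degree Cs vbl \<le> 1"
  shows "counting_lll (sample_space Omega prj V' Y H') (consH Cs vbl viol prj V' Y H')
           (violating vbl viol) (\<lambda>C D. vbl C \<inter> vbl D \<noteq> {})
           (bmax Omega prj Cs vbl viol) (csp_degree Cs vbl)"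
proof
  let ?T = "consH Cs vbl viol prj V' Y H'"
  have "finite Cs"
    using csp by (simp add: atomic_csp_def)
  then show "finite ?T"
    by (auto simp: consH_def consY_def)
  show "card {D\<in>?T. vbl C \<inter> vbl D \<noteq> {}} \<le> csp_degree Cs vbl" if "C \<in> ?T" for C
  proof -
    have "card {D\<in>?T. vbl C \<inter> vbl D \<noteq> {}} \<le> card {C'\<in>Cs. vbl C \<inter> vbl C' \<noteq> {}}"
      using \<open>finite Cs\<close> by (intro card_mono) (auto simp: consH_def consY_def)
    also have "\<dots> \<le> csp_degree Cs vbl"
      using \<open>finite Cs\<close> that by (intro card_overlapping_le_csp_degree) (auto simp: consH_def consY_def)
    finally show ?thesis .
  qed
  show "0 \<le> bmax Omega prj Cs vbl viol"
    using \<open>finite Cs\<close> by (rule bmax_nonneg)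
qed (use assms card_violating_avoiding_le sample_space_finite_nonempty in auto)

lemma prob_X_sat_ge_power:
  assumes small_b: "4 * bmax Omega prj Cs vbl viol * csp_degree Cs vbl \<le> 1"
  shows "(1 - 2 * bmax Omega prj Cs vbl viol) ^ card (consH Cs vbl viol prj V' Y H')
           \<le> prob_X_sat Omega Cs vbl viol prj V' Y H'"
proof -
  let ?b = "bmax Omega prj Cs vbl viol" and ?T = "consH Cs vbl viol prj V' Y H'"
    and ?Om = "sample_space Omega prj V' Y H'" and ?A = "violating vbl viol"
  interpret counting_lll ?Om ?T ?A "\<lambda>C D. vbl C \<inter> vbl D \<noteq> {}" ?b "csp_degree Cs vbl"
    using small_b by (rule counting_lll_sample_space)
  have "finite Cs"
    using csp by (simp add: atomic_csp_def)
  then have "2 * ?b \<le> 1"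
    using small_b p_nonneg csp_degree_ge_1[of Cs vbl]
      mult_left_mono[of 1 "real (csp_degree Cs vbl)" "4 * ?b"] by linarith
  then have "(1 - 2 * ?b) ^ card ?T * card ?Om \<le> card (avoiding ?Om ?A ?T)"
    by (rule card_avoiding_ge)
  moreover have "prob_X_sat Omega Cs vbl viol prj V' Y H' = card (avoiding ?Om ?A ?T) / card ?Om"
    using measure_pmf_of_set[OF sample_space_finite_nonempty(2,1)]
    by (simp add: prob_X_sat_def sample_space_def violating_def avoiding_def Int_def)
  moreover have "0 < card ?Om"
    using sample_space_finite_nonempty by (simp add: card_gt_0_iff)
  ultimately show ?thesis
    by (simp add: pos_le_divide_eq)
qed

end

theorem proposition4p7:
  fixes V :: "'v set" and Omega :: "'v \<Rightarrow> 'a set" and Cs :: "'c set"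
    and vbl :: "'c \<Rightarrow> 'v set" and viol :: "'c \<Rightarrow> 'v \<Rightarrow> 'a"
    and Q :: "'v \<Rightarrow> 'q set" and prj :: "'v \<Rightarrow> 'a \<Rightarrow> 'q"
    and K \<eta> \<kappa> \<epsilon> :: real and V' :: "'v set" and Y :: "'v \<Rightarrow> 'q" and H' :: "'v set"
  assumes csp: "atomic_csp V Omega Cs vbl viol"
    and prjs: "projection_scheme V Omega Q prj"
    and adm: "admissible V Omega Cs vbl viol Q prj K \<eta> \<kappa>"
    and eps: "0 < \<epsilon>" "\<epsilon> < 1/2"
    and V': "V' \<subseteq> V"
    and Y: "Y \<in> PiE V' Q"
    and comp: "is_component_HY V Cs vbl viol prj V' Y H'"
    and small: "real (card (consH Cs vbl viol prj V' Y H'))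
                  \<le> 20 * real (csp_degree Cs vbl) * ln (real (card V) * \<kappa> / \<epsilon>)"
  shows "prob_X_sat Omega Cs vbl viol prj V' Y H' \<ge> (real (card V) * \<kappa> / \<epsilon>) powr (-\<eta>)"
proof -
  let ?b = "bmax Omega prj Cs vbl viol" and ?T = "consH Cs vbl viol prj V' Y H'"
    and ?N = "real (card V) * \<kappa> / \<epsilon>"
  have "finite Cs"
    using csp by (simp add: atomic_csp_def)
  note adm' = admissibleD[OF adm this]
  have "H' \<subseteq> V"
    using comp by (auto simp: is_component_HY_def)
  then have prob: "(1 - 2 * ?b) ^ card ?T \<le> prob_X_sat Omega Cs vbl viol prj V' Y H'"
    using adm' by (intro prob_X_sat_ge_power[OF csp prjs Y]) auto
  show ?thesis
  proof (cases "card V = 0")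
    \<comment> \<open>then the bound is \<open>0 powr - \<eta> = 0\<close>\<close>
    case True
    then show ?thesis by (simp add: prob_X_sat_def)
  next
    case False
    then have "0 < ?N"
      using adm' eps by simp
    then have "?N powr - \<eta> \<le> (1 - 2 * ?b) ^ card ?T"
      using adm' small bmax_nonneg csp_degree_ge_1 \<open>finite Cs\<close>
      by (intro powr_minus_le_power_one_minus) auto
    with prob show ?thesis
      by linarith
  qed
qed

end
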